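(* Let $A,B,C\in \mathbb{C}^{n\times n}$ satisfy $ABA=ACA$. If $(AC)^{\#}$ and $(BA)^{\#}$ exist, then $(AC)^{\#}$ is similar to $(BA)^{\#}$.
   Context: A matrix $M\in \mathbb{C}^{n\times n}$ is group invertible if there exists $X$ with $MX=XM$, $XMX=X$, $MXM=M$; such $X$ is unique and denoted $M^{\#}$ (the group inverse). Two matrices $M,N$ are similar if $M=S^{-1}NS$ for some invertible $S$. *)

theory Defs
  imports "HOL-Analysis.Analysis"
begin

definition is_group_inverse :: "'a::comm_ring_1^'n^'n \<Rightarrow> 'a^'n^'n \<Rightarrow> bool" where
  "is_group_inverse M X \<longleftrightarrow> M ** X = X ** M \<and> X ** M ** X = X \<and> M ** X ** M = M"

definition group_invertible :: "'a::comm_ring_1^'n^'n \<Rightarrow> bool" where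
  "group_invertible M \<longleftrightarrow> (\<exists>X. is_group_inverse M X)"

definition group_inverse :: "'a::comm_ring_1^'n^'n \<Rightarrow> 'a^'n^'n" where
  "group_inverse M = (THE X. is_group_inverse M X)"

definition similar :: "'a::field^'n^'n \<Rightarrow> 'a^'n^'n \<Rightarrow> bool" where
  "similar M N \<longleftrightarrow> (\<exists>S. invertible S \<and> M = matrix_inv S ** N ** S)"

end

theory Submission
  imports Defs
begin

(* Put M = A C, N = B A and Y = B A C. The hypothesis A B A = A C A gives Y M = N Y,
   A Y = M^2 and Y A = N^2. A group invertible matrix splits the space as the direct sum of
   its range and its kernel, and M^2 = A Y, N^2 = Y A force M and N to have equal rank,
   hence kernels of equal dimension. Letting S act as Y on the range of M and as any
   isomorphism of ker M onto ker N gives an invertible S with S M = N S. Finally the group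
   inverse respects every intertwining relation, so S M^# = N^# S. *)

lemma is_group_inverseD:
  fixes M X :: "'a::comm_ring_1^'n^'n"
  assumes "is_group_inverse M X"
  shows "M ** X = X ** M" "X ** M ** X = X" "M ** X ** M = M"
    and "M ** M ** X = M" "X ** X ** M = X"
proof -
  show MX: "M ** X = X ** M" and XMX: "X ** M ** X = X" and MXM: "M ** X ** M = M"
    using assms unfolding is_group_inverse_def by auto
  show "M ** M ** X = M" by (metis MX MXM matrix_mul_assoc)
  show "X ** X ** M = X" by (metis MX XMX matrix_mul_assoc)
qed

lemma is_group_inverse_intertwine:
  fixes M N S X Z :: "'a::comm_ring_1^'n^'n"
  assumes M: "is_group_inverse M X" and N: "is_group_inverse N Z"
    and S: "S ** M = N ** S"
  shows "S ** X = Z ** S"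
proof -
  note M' = is_group_inverseD[OF M] and N' = is_group_inverseD[OF N]
  \<comment> \<open>Both sides reduce to N Z S X.\<close>
  have "Z ** S = Z ** Z ** N ** S" using N'(5) N'(1) by (metis matrix_mul_assoc)
  also have "\<dots> = Z ** Z ** S ** M ** M ** X" using S M'(4) by (metis matrix_mul_assoc)
  also have "\<dots> = N ** Z ** S ** X" using S N'(4) N'(5) N'(1) by (metis matrix_mul_assoc)
  finally have ZS: "Z ** S = N ** Z ** S ** X" .
  have "S ** X = S ** M ** X ** X" using M'(5) M'(1) by (metis matrix_mul_assoc)
  also have "\<dots> = N ** Z ** N ** S ** X ** X" using S N'(3) by (metis matrix_mul_assoc)
  also have "\<dots> = N ** Z ** S ** X" using S M'(5) M'(1) by (metis matrix_mul_assoc)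
  finally show ?thesis using ZS by simp
qed

lemma is_group_inverse_unique:
  fixes M X Y :: "'a::comm_ring_1^'n^'n"
  assumes "is_group_inverse M X" "is_group_inverse M Y"
  shows "X = Y"
  using is_group_inverse_intertwine[OF assms, of "mat 1"] by simp

lemma is_group_inverse_group_inverse:
  fixes M :: "'a::comm_ring_1^'n^'n"
  assumes "group_invertible M"
  shows "is_group_inverse M (group_inverse M)"
proof -
  obtain X where X: "is_group_inverse M X"
    using assms unfolding group_invertible_def by blast
  then have "group_inverse M = X"
    unfolding group_inverse_def using is_group_inverse_unique by blast
  with X show ?thesis by simp
qed

lemma matrix_inv_left:
  fixes S :: "'a::semiring_1^'n^'n"
  assumes "invertible S"
  shows "matrix_inv S ** S = mat 1"
  using someI_ex[OF assms[unfolded invertible_def]] unfolding matrix_inv_def by simp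

lemma similarI:
  fixes M N S :: "'a::field^'n^'n"
  assumes "invertible S" "S ** M = N ** S"
  shows "similar M N"
proof -
  have "M = matrix_inv S ** S ** M" by (simp add: matrix_inv_left[OF assms(1)])
  also have "\<dots> = matrix_inv S ** N ** S" by (metis assms(2) matrix_mul_assoc)
  finally show ?thesis unfolding similar_def using assms(1) by blast
qed

lemma is_group_inverse_kernel_square:
  fixes M X :: "'a::field^'n^'n"
  assumes "is_group_inverse M X" "M *v (M *v v) = 0"
  shows "M *v v = 0"
proof -
  have "M *v v = (X ** M ** M) *v v"
    using is_group_inverseD(1,3)[OF assms(1)] by (metis matrix_mul_assoc)
  also have "\<dots> = 0" by (simp add: assms(2) matrix_vector_mul_assoc[symmetric])
  finally show ?thesis .
qed

lemma is_group_inverse_dim_range_kernel: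
  fixes M X :: "'a::field^'n^'n"
  assumes "is_group_inverse M X"
  shows "vec.dim (range ((*v) M)) + vec.dim {v. M *v v = 0} = vec.dim (UNIV :: ('a^'n) set)"
proof -
  have "v \<in> {u + w |u w. u \<in> range ((*v) M) \<and> w \<in> {v. M *v v = 0}}" for v
  proof -
    have "M *v (v - M *v (X *v v)) = 0"
      using is_group_inverseD(4)[OF assms]
      by (simp add: matrix_vector_mult_diff_distrib matrix_vector_mul_assoc matrix_mul_assoc)
    then show ?thesis by (intro CollectI exI[of _ "M *v (X *v v)"] exI[of _ "v - M *v (X *v v)"]) auto
  qed
  then have sum: "{u + w |u w. u \<in> range ((*v) M) \<and> w \<in> {v. M *v v = 0}} = UNIV" by auto
  have "range ((*v) M) \<inter> {v. M *v v = 0} = {0}"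
    using is_group_inverse_kernel_square[OF assms] by (auto intro: range_eqI[of _ _ 0])
  with sum show ?thesis
    using vec.dim_sums_Int[OF vec.subspace_image[OF vec.subspace_UNIV] vec.subspace_kernel, of M M] by simp
qed

lemma dim_range_matrix_mul_le:
  fixes P Q R :: "'a::field^'n^'n"
  shows "vec.dim (range ((*v) (P ** Q ** R))) \<le> vec.dim (range ((*v) Q))"
proof -
  have "range ((*v) (P ** Q ** R)) \<subseteq> (*v) P ` range ((*v) Q)"
    by (auto simp: matrix_vector_mul_assoc[symmetric])
  then show ?thesis
    using vec.dim_subset vec.dim_image_le[OF matrix_vector_mul_linear_gen] le_trans by blast
qed

lemma subspace_isomorphism_matrix:
  fixes U V :: "('a::field^'n) set"
  assumes "vec.subspace U" "vec.subspace V" "vec.dim U = vec.dim V"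
  obtains K :: "'a^'n^'n" where "(*v) K ` U = V" "inj_on ((*v) K) U"
proof -
  obtain f where "Vector_Spaces.linear (*s) (*s) f" "f ` U = V" "inj_on f U"
    using vec.subspace_isomorphism[OF assms] by blast
  then show ?thesis using that[of "matrix f"] by (simp add: matrix_works)
qed

lemma dim_kernel_eq_if_square_factorisations:
  fixes M N X Z Y A :: "'a::field^'n^'n"
  assumes M: "is_group_inverse M X" and N: "is_group_inverse N Z"
    and YM: "Y ** M = N ** Y" and AY: "A ** Y = M ** M" and YA: "Y ** A = N ** N"
  shows "vec.dim {v. M *v v = 0} = vec.dim {v. N *v v = 0}"
proof -
  note M' = is_group_inverseD[OF M] and N' = is_group_inverseD[OF N]
  have "N = N ** N ** N ** Z ** Z" by (metis N'(1) N'(4) matrix_mul_assoc)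
  also have "\<dots> = Y ** M ** (A ** Z ** Z)" by (metis YA YM matrix_mul_assoc)
  finally have "vec.dim (range ((*v) N)) \<le> vec.dim (range ((*v) M))"
    by (metis dim_range_matrix_mul_le)
  moreover have "M = M ** M ** M ** X ** X" by (metis M'(1) M'(4) matrix_mul_assoc)
  then have "M = A ** N ** (Y ** X ** X)" by (metis AY YM matrix_mul_assoc)
  then have "vec.dim (range ((*v) M)) \<le> vec.dim (range ((*v) N))"
    by (metis dim_range_matrix_mul_le)
  ultimately show ?thesis
    using is_group_inverse_dim_range_kernel[OF M] is_group_inverse_dim_range_kernel[OF N] by linarith
qed

lemma invertible_intertwiner_from_kernel_map:
  fixes M N X Z Y A K :: "'a::field^'n^'n"
  assumes M: "is_group_inverse M X" and N: "is_group_inverse N Z"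
    and YM: "Y ** M = N ** Y" and AY: "A ** Y = M ** M"
    and K: "(*v) K ` {v. M *v v = 0} \<subseteq> {v. N *v v = 0}"
    and K_inj: "inj_on ((*v) K) {v. M *v v = 0}"
  obtains S where "invertible S" "S ** M = N ** S"
proof -
  note M' = is_group_inverseD[OF M]
  \<comment> \<open>P is the projection onto the range of M along its kernel.\<close>
  define P where "P = M ** X"
  define S where "S = Y ** P + K ** (mat 1 - P)"
  have S_apply: "S *v v = Y *v (P *v v) + K *v (v - P *v v)" for v
    by (simp add: S_def matrix_vector_mult_add_rdistrib matrix_vector_mult_diff_rdistrib
        matrix_vector_right_distrib matrix_vector_mult_diff_distrib matrix_vector_mul_assoc[symmetric])
  have PM: "P *v (M *v v) = M *v v" and MP: "M *v (P *v v) = M *v v" for v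
    unfolding P_def using M'(3,4) by (simp_all add: matrix_vector_mul_assoc matrix_mul_assoc)
  have YP: "Y ** P = N ** (Y ** X)" unfolding P_def by (metis YM matrix_mul_assoc)
  have ker_M: "M *v (v - P *v v) = 0" for v
    by (simp add: matrix_vector_mult_diff_distrib MP)
  then have ker_N: "N *v (K *v (v - P *v v)) = 0" for v using K by blast
  have SM: "S ** M = N ** S"
  proof (rule iffD2[OF matrix_eq], intro allI)
    fix v
    have "(S ** M) *v v = Y *v (M *v v)"
      by (simp add: matrix_vector_mul_assoc[symmetric] S_apply PM)
    also have "\<dots> = Y *v (M *v (P *v v))" by (simp add: MP)
    also have "\<dots> = N *v (Y *v (P *v v))" by (metis matrix_vector_mul_assoc YM)
    also have "\<dots> = (N ** S) *v v"
      by (simp add: matrix_vector_mul_assoc[symmetric] S_apply matrix_vector_right_distrib ker_N)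
    finally show "(S ** M) *v v = (N ** S) *v v" .
  qed
  have "x = 0" if Sx: "S *v x = 0" for x
  proof -
    define u where "u = Y *v (P *v x)"
    define w where "w = x - P *v x"
    have uw: "u + K *v w = 0" using Sx by (simp add: S_apply u_def w_def)
    \<comment> \<open>u lies in the range of N and K w in its kernel, which meet only in 0.\<close>
    then have "N *v u = 0"
      using ker_N[of x] unfolding w_def
      by (metis add.right_neutral matrix_vector_mult_0_right matrix_vector_right_distrib)
    moreover have "u = N *v (Y *v (X *v x))"
      unfolding u_def by (metis YP matrix_vector_mul_assoc)
    ultimately have u0: "u = 0"
      using is_group_inverse_kernel_square[OF N] by simp
    have w0: "w = 0"
    proof (rule inj_onD[OF K_inj])
      show "K *v w = K *v 0" using uw u0 by simp
      show "w \<in> {v. M *v v = 0}" unfolding w_def using ker_M by simp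
    qed simp
    have "M *v (M *v x) = A *v u"
      unfolding u_def P_def by (metis AY M'(4) matrix_vector_mul_assoc matrix_mul_assoc)
    then have "M *v x = 0" using is_group_inverse_kernel_square[OF M] u0 by simp
    then have "P *v x = 0"
      unfolding P_def using M'(1) by (metis matrix_vector_mul_assoc matrix_vector_mult_0_right)
    then show "x = 0" using w0 by (simp add: w_def)
  qed
  then have "invertible S"
    by (simp add: invertible_left_inverse matrix_left_invertible_ker)
  then show ?thesis using SM by (rule that)
qed

lemma invertible_intertwiner_if_square_factorisations:
  fixes M N X Z Y A :: "'a::field^'n^'n"
  assumes M: "is_group_inverse M X" and N: "is_group_inverse N Z"
    and YM: "Y ** M = N ** Y" and AY: "A ** Y = M ** M" and "Y ** A = N ** N"
  obtains S where "invertible S" "S ** M = N ** S"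
proof -
  obtain K where "(*v) K ` {v. M *v v = 0} = {v. N *v v = 0}" "inj_on ((*v) K) {v. M *v v = 0}"
    using subspace_isomorphism_matrix[OF vec.subspace_kernel vec.subspace_kernel
        dim_kernel_eq_if_square_factorisations[OF assms]] .
  then show ?thesis
    using invertible_intertwiner_from_kernel_map[OF M N YM AY] that by blast
qed

theorem corollary3p2:
  fixes A B C :: "complex^'n^'n"
  assumes "A ** B ** A = A ** C ** A"
    and "group_invertible (A ** C)"
    and "group_invertible (B ** A)"
  shows "similar (group_inverse (A ** C)) (group_inverse (B ** A))"
proof -
  let ?M = "A ** C" and ?N = "B ** A" and ?Y = "B ** A ** C"
  have M: "is_group_inverse ?M (group_inverse ?M)" and N: "is_group_inverse ?N (group_inverse ?N)"
    using assms(2,3) by (simp_all add: is_group_inverse_group_inverse)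
  have "?Y ** ?M = ?N ** ?Y" "A ** ?Y = ?M ** ?M" "?Y ** A = ?N ** ?N"
    using assms(1) by (metis matrix_mul_assoc)+
  then obtain S where "invertible S" "S ** ?M = ?N ** S"
    using invertible_intertwiner_if_square_factorisations[OF M N] by blast
  then show ?thesis
    using similarI is_group_inverse_intertwine[OF M N] by blast
qed

end
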